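(* Let $\mathcal A$ be an ordered normed algebra with unit $e$ whose algebra cone $\mathcal A^+$ is normal with normality constant $\alpha$. Let $a,b\in\mathcal A$ with at least one of them positive. Then for every $\delta$ with $0<\delta<\frac{1}{\alpha}e^{-2\alpha\|a\|\,\|b\|}$ there is no $x\in\mathcal A$ with $\|x\|<\delta$ and $ab-ba\geq e+x$.
   Context: A normed algebra $\mathcal A$ (real or complex, with submultiplicative norm) with unit $e$. A cone is a nonempty subset $\mathcal A^+\subseteq\mathcal A$ with $\mathcal A^++\mathcal A^+\subseteq\mathcal A^+$, $\lambda\mathcal A^+\subseteq\mathcal A^+$ for all $\lambda\geq 0$, and $\mathcal A^+\cap(-\mathcal A^+)=\{0\}$; it induces the partial order $a\leq b \iff b-a\in\mathcal A^+$. Elements of $\mathcal A^+$ are called positive. The cone is an algebra cone if $\mathcal A^+\cdot\mathcal A^+\subseteq\mathcal A^+$ and $e\in\mathcal A^+$; then $\mathcal A$ is called an ordered normed algebra. The cone is normal with normality constant $\alpha$ (necessarily $\alpha\geq1$) if $0\leq x\leq y$ implies $\|x\|\leq\alpha\|y\|$. In the bound, $e^{(\cdot)}$ denotes the real exponential function. *)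

theory Defs
  imports "HOL-Analysis.Analysis"
begin

text \<open>A unital normed algebra (real, or complex viewed as real; submultiplicative norm)
  is modelled by the type class combination real_normed_algebra + ring_1, whose
  unit is 1 (with 1 \<noteq> 0; the norm of 1 is NOT required to be 1).\<close>

definition cone :: "'a::real_vector set \<Rightarrow> bool" where
  "cone C \<longleftrightarrow> C \<noteq> {} \<and> (\<forall>x\<in>C. \<forall>y\<in>C. x + y \<in> C)
     \<and> (\<forall>x\<in>C. \<forall>c::real. c \<ge> 0 \<longrightarrow> c *\<^sub>R x \<in> C)
     \<and> C \<inter> uminus ` C = {0}"

definition cone_le :: "'a::real_vector set \<Rightarrow> 'a \<Rightarrow> 'a \<Rightarrow> bool" where
  "cone_le C x y \<longleftrightarrow> y - x \<in> C"

definition algebra_cone :: "'a::{real_normed_algebra, ring_1} set \<Rightarrow> bool" where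
  "algebra_cone C \<longleftrightarrow> cone C \<and> (\<forall>x\<in>C. \<forall>y\<in>C. x * y \<in> C) \<and> 1 \<in> C"

definition normal_cone :: "'a::real_normed_vector set \<Rightarrow> real \<Rightarrow> bool" where
  "normal_cone C \<alpha> \<longleftrightarrow>
     (\<forall>x y. cone_le C 0 x \<and> cone_le C x y \<longrightarrow> norm x \<le> \<alpha> * norm y)"

end

theory Submission
  imports Defs
begin

text \<open>Suppose \<open>a \<ge> 0\<close> and \<open>ab - ba \<ge> e + x\<close>. Differentiating the power map,
  \<open>a\<^sup>n\<^sup>+\<^sup>1 b - b a\<^sup>n\<^sup>+\<^sup>1 = \<Sum>\<^sub>k a\<^sup>k (ab - ba) a\<^sup>n\<^sup>-\<^sup>k \<ge> (n+1) a\<^sup>n + \<Sum>\<^sub>k a\<^sup>k x a\<^sup>n\<^sup>-\<^sup>k\<close>, and since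
  \<open>(n+1) a\<^sup>n \<ge> 0\<close>, normality yields
  \<open>(n+1) \<parallel>a\<^sup>n\<parallel> \<le> \<alpha> (2 \<parallel>b\<parallel> \<parallel>a\<^sup>n\<^sup>+\<^sup>1\<parallel> + (n+1) \<parallel>a\<parallel>\<^sup>n \<parallel>x\<parallel>)\<close>.
  Iterating this from \<open>n = 0\<close> gives a partial sum of an exponential series, so
  \<open>1 \<le> \<parallel>e\<parallel> \<le> \<alpha> \<parallel>x\<parallel> exp (2 \<alpha> \<parallel>a\<parallel> \<parallel>b\<parallel>)\<close>. The case \<open>b \<ge> 0\<close> reduces to this one via
  the pair \<open>(b, -a)\<close>, which has the same commutator.\<close>

text \<open>\<open>pow_deriv a y n = \<Sum>\<^sub>k\<^sub><\<^sub>n a\<^sup>k y a\<^sup>n\<^sup>-\<^sup>1\<^sup>-\<^sup>k\<close>, the derivative of \<open>t \<mapsto> t\<^sup>n\<close> at \<open>a\<close> in direction \<open>y\<close>.\<close>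

primrec pow_deriv :: "'a::{real_normed_algebra, ring_1} \<Rightarrow> 'a \<Rightarrow> nat \<Rightarrow> 'a" where
  "pow_deriv a y 0 = 0"
| "pow_deriv a y (Suc n) = pow_deriv a y n * a + a ^ n * y"

lemma pow_deriv_add: "pow_deriv a (y + z) n = pow_deriv a y n + pow_deriv a z n"
  by (induction n) (simp_all add: algebra_simps)

lemma pow_deriv_one: "pow_deriv a 1 (Suc n) = real (Suc n) *\<^sub>R a ^ n"
proof (induction n)
  case (Suc n)
  have "real (Suc n) *\<^sub>R a ^ n * a + a ^ Suc n = (real (Suc n) + 1) *\<^sub>R a ^ Suc n"
    by (simp only: mult_scaleR_left power_Suc2 scaleR_add_left scaleR_one)
  with Suc show ?case by simp
qed simp

lemma power_commutator: "a ^ n * b - b * a ^ n = pow_deriv a (a * b - b * a) n"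
proof (induction n)
  case (Suc n)
  have "a ^ Suc n * b - b * a ^ Suc n = (a ^ n * b - b * a ^ n) * a + a ^ n * (a * b - b * a)"
    by (simp add: algebra_simps power_Suc2 mult.assoc)
       (simp add: power_Suc power_commutes mult.assoc[symmetric])
  with Suc show ?case by simp
qed simp

lemma norm_power_mult_le:
  fixes a z :: "'a::{real_normed_algebra, ring_1}"
  shows "norm (a ^ n * z) \<le> norm a ^ n * norm z"
proof (induction n)
  case (Suc n)
  have "norm (a ^ Suc n * z) \<le> norm a * norm (a ^ n * z)"
    by (simp add: mult.assoc norm_mult_ineq)
  also have "\<dots> \<le> norm a * (norm a ^ n * norm z)"
    by (simp add: Suc mult_left_mono)
  finally show ?case by (simp add: mult.assoc)
qed simp

lemma norm_power_Suc_le: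
  fixes a :: "'a::{real_normed_algebra, ring_1}"
  shows "norm (a ^ Suc n) \<le> norm a ^ Suc n"
proof -
  have "norm (a ^ n * a) \<le> norm a ^ n * norm a" by (rule norm_power_mult_le)
  then show ?thesis by (simp only: power_Suc2)
qed

lemma norm_one_ge_1: "1 \<le> norm (1::'a::{real_normed_algebra, ring_1})"
proof -
  have "norm (1::'a) * 1 \<le> norm (1::'a) * norm (1::'a)"
    using norm_mult_ineq[of "1::'a" 1] by simp
  then show ?thesis by simp
qed

lemma norm_pow_deriv_le:
  fixes a y :: "'a::{real_normed_algebra, ring_1}"
  shows "norm (pow_deriv a y (Suc n)) \<le> real (Suc n) * norm a ^ n * norm y"
proof (induction n)
  case (Suc n)
  have "norm (pow_deriv a y (Suc (Suc n)))
      \<le> norm (pow_deriv a y (Suc n) * a) + norm (a ^ Suc n * y)"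
    by (simp add: norm_triangle_ineq)
  also have "\<dots> \<le> norm (pow_deriv a y (Suc n)) * norm a + norm a ^ Suc n * norm y"
    by (intro add_mono norm_mult_ineq norm_power_mult_le)
  also have "\<dots> \<le> real (Suc n) * norm a ^ n * norm y * norm a + norm a ^ Suc n * norm y"
    by (intro add_mono mult_right_mono Suc) auto
  finally show ?case by (simp add: algebra_simps)
qed simp

lemma
  assumes "algebra_cone C"
  shows algebra_cone_zero: "0 \<in> C"
    and algebra_cone_one: "1 \<in> C"
    and algebra_cone_add: "x \<in> C \<Longrightarrow> y \<in> C \<Longrightarrow> x + y \<in> C"
    and algebra_cone_mult: "x \<in> C \<Longrightarrow> y \<in> C \<Longrightarrow> x * y \<in> C"
    and algebra_cone_scaleR: "x \<in> C \<Longrightarrow> 0 \<le> c \<Longrightarrow> c *\<^sub>R x \<in> C"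
  using assms unfolding algebra_cone_def cone_def by blast+

lemma algebra_cone_power: "algebra_cone C \<Longrightarrow> a \<in> C \<Longrightarrow> a ^ n \<in> C"
  by (induction n) (simp_all add: algebra_cone_one algebra_cone_mult)

lemma algebra_cone_pow_deriv:
  "algebra_cone C \<Longrightarrow> a \<in> C \<Longrightarrow> y \<in> C \<Longrightarrow> pow_deriv a y n \<in> C"
  by (induction n)
     (simp_all add: algebra_cone_zero algebra_cone_add algebra_cone_mult algebra_cone_power)

lemma normal_cone_const_ge_1:
  fixes C :: "'a::{real_normed_algebra, ring_1} set"
  assumes "algebra_cone C" and "normal_cone C \<alpha>"
  shows "1 \<le> \<alpha>"
proof -
  have "cone_le C 0 (1::'a)" and "cone_le C (1::'a) 1"
    unfolding cone_le_def using algebra_cone_zero[OF assms(1)] algebra_cone_one[OF assms(1)]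
    by simp_all
  then have "norm (1::'a) \<le> \<alpha> * norm (1::'a)"
    using assms(2) unfolding normal_cone_def by blast
  then show ?thesis by simp
qed

lemma normal_cone_power_recurrence:
  fixes a b x :: "'a::{real_normed_algebra, ring_1}"
  assumes ac: "algebra_cone C" and nc: "normal_cone C \<alpha>" and "a \<in> C"
    and le: "cone_le C (1 + x) (a * b - b * a)"
  shows "norm (a ^ k) \<le> 2 * \<alpha> * norm b / real (Suc k) * norm (a ^ Suc k)
           + \<alpha> * norm x * norm a ^ k"
proof -
  define D where "D = a * b - b * a - (1 + x)"
  define c where "c = a ^ Suc k * b - b * a ^ Suc k"
  define P where "P = real (Suc k) *\<^sub>R a ^ k"
  have "D \<in> C" using le unfolding D_def cone_le_def .
  have "c = P + pow_deriv a x (Suc k) + pow_deriv a D (Suc k)"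
    unfolding c_def P_def power_commutator pow_deriv_one[symmetric]
    by (simp add: D_def pow_deriv_add[symmetric] del: pow_deriv.simps)
  then have "cone_le C P (c - pow_deriv a x (Suc k))"
    unfolding cone_le_def using algebra_cone_pow_deriv[OF ac \<open>a \<in> C\<close> \<open>D \<in> C\<close>]
    by (simp del: pow_deriv.simps)
  moreover have "cone_le C 0 P"
    unfolding cone_le_def P_def
    using algebra_cone_scaleR[OF ac algebra_cone_power[OF ac \<open>a \<in> C\<close>]] by simp
  ultimately have "norm P \<le> \<alpha> * norm (c - pow_deriv a x (Suc k))"
    using nc unfolding normal_cone_def by blast
  then have "real (Suc k) * norm (a ^ k) \<le> \<alpha> * norm (c - pow_deriv a x (Suc k))"
    unfolding P_def by simp
  also have "\<dots> \<le> \<alpha> * (2 * norm b * norm (a ^ Suc k) + real (Suc k) * norm a ^ k * norm x)"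
  proof (rule mult_left_mono)
    have "norm (c - pow_deriv a x (Suc k))
        \<le> norm (a ^ Suc k * b) + norm (b * a ^ Suc k) + norm (pow_deriv a x (Suc k))"
      unfolding c_def
      using norm_triangle_ineq4[of "a ^ Suc k * b - b * a ^ Suc k" "pow_deriv a x (Suc k)"]
        norm_triangle_ineq4[of "a ^ Suc k * b" "b * a ^ Suc k"]
      by linarith
    also have "\<dots> \<le> norm (a ^ Suc k) * norm b + norm b * norm (a ^ Suc k)
        + real (Suc k) * norm a ^ k * norm x"
      by (intro add_mono norm_mult_ineq norm_pow_deriv_le)
    finally show "norm (c - pow_deriv a x (Suc k))
        \<le> 2 * norm b * norm (a ^ Suc k) + real (Suc k) * norm a ^ k * norm x"
      by (simp add: mult.commute)
    show "0 \<le> \<alpha>" using normal_cone_const_ge_1[OF ac nc] by simp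
  qed
  finally show ?thesis by (simp add: field_simps del: of_nat_Suc)
qed

lemma backward_recurrence_exp_bound:
  fixes s :: "nat \<Rightarrow> real"
  assumes "0 \<le> \<beta>"
    and step: "\<And>k. s k \<le> \<beta> / real (Suc k) * s (Suc k) + \<epsilon> * r ^ k"
    and growth: "\<And>k. 0 < k \<Longrightarrow> s k \<le> r ^ k"
  shows "s 0 \<le> \<epsilon> * exp (\<beta> * r)"
proof -
  have iterate: "s 0 \<le> \<beta> ^ N / fact N * s N + \<epsilon> * (\<Sum>k<N. (\<beta> * r) ^ k / fact k)" for N
  proof (induction N)
    case (Suc N)
    have "\<beta> ^ N / fact N * s N \<le> \<beta> ^ N / fact N * (\<beta> / real (Suc N) * s (Suc N) + \<epsilon> * r ^ N)"
      using \<open>0 \<le> \<beta>\<close> by (intro mult_left_mono step) simp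
    also have "\<dots> = \<beta> ^ Suc N / fact (Suc N) * s (Suc N) + \<epsilon> * ((\<beta> * r) ^ N / fact N)"
      by (simp add: field_simps power_mult_distrib del: of_nat_Suc)
    finally show ?case using Suc.IH by (simp only: sum.lessThan_Suc distrib_left)
  qed simp
  have bound: "s 0 \<le> (\<beta> * r) ^ N / fact N + \<epsilon> * (\<Sum>k<N. (\<beta> * r) ^ k / fact k)"
    if "0 < N" for N
  proof -
    have "\<beta> ^ N / fact N * s N \<le> \<beta> ^ N / fact N * r ^ N"
      using growth[OF that] \<open>0 \<le> \<beta>\<close> by (intro mult_left_mono) auto
    also have "\<dots> = (\<beta> * r) ^ N / fact N"
      by (simp add: power_mult_distrib)
    finally show ?thesis using iterate[of N] by linarith
  qed
  have exp_sums: "(\<lambda>n. (\<beta> * r) ^ n / fact n) sums exp (\<beta> * r)"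
    using exp_converges[of "\<beta> * r"] by (simp add: divide_inverse mult.commute)
  have "(\<lambda>N. (\<beta> * r) ^ N / fact N + \<epsilon> * (\<Sum>k<N. (\<beta> * r) ^ k / fact k))
      \<longlonglongrightarrow> \<epsilon> * exp (\<beta> * r)"
    using tendsto_add[OF summable_LIMSEQ_zero[OF sums_summable[OF exp_sums]]
        tendsto_mult_left[OF exp_sums[unfolded sums_def]]]
    by simp
  then show ?thesis
    by (rule LIMSEQ_le_const) (intro exI[of _ 1] allI impI bound, simp)
qed

lemma commutator_ge_one_add_bound:
  fixes a b x :: "'a::{real_normed_algebra, ring_1}"
  assumes ac: "algebra_cone C" and nc: "normal_cone C \<alpha>" and "a \<in> C"
    and le: "cone_le C (1 + x) (a * b - b * a)"
  shows "1 \<le> \<alpha> * norm x * exp (2 * \<alpha> * norm a * norm b)"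
proof -
  have "norm (a ^ 0) \<le> \<alpha> * norm x * exp (2 * \<alpha> * norm b * norm a)"
  proof (rule backward_recurrence_exp_bound)
    show "0 \<le> 2 * \<alpha> * norm b" using normal_cone_const_ge_1[OF ac nc] by simp
    show "norm (a ^ k) \<le> 2 * \<alpha> * norm b / real (Suc k) * norm (a ^ Suc k)
        + \<alpha> * norm x * norm a ^ k" for k
      by (rule normal_cone_power_recurrence[OF ac nc \<open>a \<in> C\<close> le])
    show "norm (a ^ k) \<le> norm a ^ k" if "0 < k" for k
      using norm_power_Suc_le[of a "k - 1"] that by simp
  qed
  then show ?thesis
    using norm_one_ge_1[where 'a = 'a] by (simp add: mult_ac)
qed

theorem corollary2p5:
  fixes C :: "'a::{real_normed_algebra, ring_1} set"
    and \<alpha> \<delta> :: real and a b :: 'a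
  assumes "algebra_cone C"
    and "normal_cone C \<alpha>"
    and "a \<in> C \<or> b \<in> C"
    and "0 < \<delta>"
    and "\<delta> < (1 / \<alpha>) * exp (- 2 * \<alpha> * norm a * norm b)"
  shows "\<not> (\<exists>x. norm x < \<delta> \<and> cone_le C (1 + x) (a * b - b * a))"
proof
  assume "\<exists>x. norm x < \<delta> \<and> cone_le C (1 + x) (a * b - b * a)"
  then obtain x where "norm x < \<delta>" and le: "cone_le C (1 + x) (a * b - b * a)" by blast
  have \<alpha>1: "1 \<le> \<alpha>" by (rule normal_cone_const_ge_1[OF assms(1,2)])
  define K where "K = 2 * \<alpha> * norm a * norm b"
  have "1 \<le> \<alpha> * norm x * exp K"
    using assms(3)
  proof
    assume "a \<in> C"
    then show ?thesis
      using commutator_ge_one_add_bound[OF assms(1,2) _ le] unfolding K_def by simp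
  next
    assume "b \<in> C"
    have "cone_le C (1 + x) (b * - a - - a * b)" using le by simp
    from commutator_ge_one_add_bound[OF assms(1,2) \<open>b \<in> C\<close> this]
    show ?thesis unfolding K_def by (simp add: mult_ac)
  qed
  also have "\<alpha> * norm x * exp K < \<alpha> * \<delta> * exp K"
    using \<open>norm x < \<delta>\<close> \<alpha>1 by simp
  also have "\<dots> < exp (- K) * exp K"
    using assms(5) \<alpha>1 unfolding K_def by (simp add: field_simps)
  also have "\<dots> = 1" by (metis exp_minus_inverse mult.commute)
  finally show False by simp
qed

end
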